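(* In the social learning model, suppose $G_-$ and $G_+$ are continuous and the left tail of $G_-$ is convex and differentiable. Then for every $L\in\mathbb{R}$ there exists $m_L>0$ such that for every $t\ge1$ and every $x\ge L$ with $\mathbb{P}_+(\ell_t=x)>0$, $$\mathbb{P}_+(E_t\mid \ell_t=x)\ge m_L.$$
   Context: Social learning model. A state $\theta\in\{-1,+1\}$ is drawn with $\mathbb{P}(\theta=+1)=\mathbb{P}(\theta=-1)=1/2$. Agents $t=1,2,\dots$ receive private signals $s_t\in\mathbb{R}$ that are i.i.d. conditionally on $\theta$, with CDF $F_+$ if $\theta=+1$ and $F_-$ if $\theta=-1$; $F_+$ and $F_-$ are mutually absolutely continuous. Let $L_t=\log\frac{\mathbb{P}(\theta=+1\mid s_t)}{\mathbb{P}(\theta=-1\mid s_t)}$ be the private log-likelihood ratio, and let $G_+$, $G_-$ denote the CDFs of $L_t$ conditional on $\theta=+1$, $\theta=-1$ respectively. Signals are assumed unbounded: for every $M\in\mathbb{R}$, $\mathbb{P}(L_t>M)>0$ and $\mathbb{P}(L_t<-M)>0$. Agent $t$ observes $a_1,\dots,a_{t-1}$ and her own signal and chooses $a_t\in\{-1,+1\}$ (utility $1$ if $a_t=\theta$, else $0$). The public belief is $\mu_t=\mathbb{P}(\theta=+1\mid a_1,\dots,a_{t-1})$ and $\ell_t=\log\frac{\mu_t}{1-\mu_t}$ (so $\ell_1=0$). In equilibrium $a_t=+1$ iff $\ell_t+L_t>0$, and otherwise $a_t=-1$. Consequently $\ell_{t+1}=\ell_t+D_+(\ell_t)$ if $a_t=+1$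 and $\ell_{t+1}=\ell_t+D_-(\ell_t)$ if $a_t=-1$, where $D_+(x)=\log\frac{1-G_+(-x)}{1-G_-(-x)}$ and $D_-(x)=\log\frac{G_+(-x)}{G_-(-x)}$. We write $\mathbb{P}_+(\cdot)=\mathbb{P}(\cdot\mid\theta=+1)$ and $\mathbb{E}_+$ for the corresponding expectation. "The left tail of $G_-$ is convex and differentiable" means: there exists $x_0\in\mathbb{R}$ such that the restriction of $G_-$ to $(-\infty,x_0)$ is convex and differentiable. $E_t$ denotes the event that $a_\tau=+1$ for all $\tau\ge t$. *)

theory Defs
  imports "HOL-Probability.Probability"
begin

text \<open>The signal laws F+ and F- are probability measures
 mu_p and mu_m on the reals. Conditionally on theta = +1 the signal sequence is
 i.i.d. with law mu_p, i.e. P_+ is the infinite product measure; a point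
 w :: nat => real of it gives the signal w t of agent t (t >= 1; w 0 is unused).\<close>

definition Pplus :: "real measure \<Rightarrow> (nat \<Rightarrow> real) measure" where
  "Pplus mu_p = PiM UNIV (\<lambda>_. mu_p)"

text \<open>Private log-likelihood ratio of a signal s (uniform prior):
 log P(theta=+1|s)/P(theta=-1|s) = log (dF+/dF-)(s).\<close>
definition LLR :: "real measure \<Rightarrow> real measure \<Rightarrow> real \<Rightarrow> real" where
  "LLR mu_p mu_m s = ln (enn2real (RN_deriv mu_m mu_p s))"

definition Gp :: "real measure \<Rightarrow> real measure \<Rightarrow> real \<Rightarrow> real" where
  "Gp mu_p mu_m x = measure mu_p {s \<in> space mu_p. LLR mu_p mu_m s \<le> x}"

definition Gm :: "real measure \<Rightarrow> real measure \<Rightarrow> real \<Rightarrow> real" where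
  "Gm mu_p mu_m x = measure mu_m {s \<in> space mu_m. LLR mu_p mu_m s \<le> x}"

definition Dp :: "real measure \<Rightarrow> real measure \<Rightarrow> real \<Rightarrow> real" where
  "Dp mu_p mu_m x = ln ((1 - Gp mu_p mu_m (-x)) / (1 - Gm mu_p mu_m (-x)))"

definition Dm :: "real measure \<Rightarrow> real measure \<Rightarrow> real \<Rightarrow> real" where
  "Dm mu_p mu_m x = ln (Gp mu_p mu_m (-x) / Gm mu_p mu_m (-x))"

text \<open>Public log-likelihood ratio ell_t (t >= 1), following the equilibrium recursion;
 ell 0 is a dummy value.\<close>
fun pubLLR :: "real measure \<Rightarrow> real measure \<Rightarrow> nat \<Rightarrow> (nat \<Rightarrow> real) \<Rightarrow> real" where
  "pubLLR mu_p mu_m 0 w = 0"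
| "pubLLR mu_p mu_m (Suc 0) w = 0"
| "pubLLR mu_p mu_m (Suc (Suc n)) w =
     (let l = pubLLR mu_p mu_m (Suc n) w in
      if l + LLR mu_p mu_m (w (Suc n)) > 0 then l + Dp mu_p mu_m l else l + Dm mu_p mu_m l)"

definition action :: "real measure \<Rightarrow> real measure \<Rightarrow> nat \<Rightarrow> (nat \<Rightarrow> real) \<Rightarrow> int" where
  "action mu_p mu_m t w = (if pubLLR mu_p mu_m t w + LLR mu_p mu_m (w t) > 0 then 1 else -1)"

definition eventE :: "real measure \<Rightarrow> real measure \<Rightarrow> nat \<Rightarrow> (nat \<Rightarrow> real) set" where
  "eventE mu_p mu_m t = {w \<in> space (Pplus mu_p). \<forall>\<tau>\<ge>t. action mu_p mu_m \<tau> w = 1}"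

definition ellEq :: "real measure \<Rightarrow> real measure \<Rightarrow> nat \<Rightarrow> real \<Rightarrow> (nat \<Rightarrow> real) set" where
  "ellEq mu_p mu_m t x = {w \<in> space (Pplus mu_p). pubLLR mu_p mu_m t w = x}"

end

theory Submission
  imports Defs
begin

text \<open>Given l_t = x, the event E_t says that the signals of agents t, t+1, ... keep the public
  log-likelihood ratio on the orbit x_0 = x, x_(k+1) = x_k + D_+(x_k) of the all-(+1) history.
  These signals are independent of l_t, so the conditional probability of E_t is the infinite
  product of the factors 1 - G_+(-x_k). Since the law of L_t under theta = +1 has density e^z with
  respect to its law under theta = -1, D_+(y) >= G_-(-y) - G_+(-y) > 0; hence the orbit passes any
  threshold T after a number of steps that is bounded uniformly in x >= L. Beyond a large T,
  G_+(-x_k) <= C (e^(-x_k) - e^(-x_(k+1))) telescopes, so the tail of the product stays above 1/2.\<close>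

section \<open>Pairs of CDFs related by a likelihood ratio\<close>

text \<open>The assumptions say that dG_+ = e^z dG_- and that the signals are unbounded.\<close>

locale llr_cdf_pair =
  fixes Gp Gm :: "real \<Rightarrow> real"
  assumes mono_Gm: "mono Gm"
    and Gp_nonneg: "0 \<le> Gp z"
    and Gp_diff_le: "a \<le> b \<Longrightarrow> Gp b - Gp a \<le> exp b * (Gm b - Gm a)"
    and Gp_diff_ge: "a \<le> b \<Longrightarrow> exp a * (Gm b - Gm a) \<le> Gp b - Gp a"
    and Gp_le: "Gp z \<le> exp z * Gm z"
    and Gp_upper_tail_ge: "exp z * (1 - Gm z) \<le> 1 - Gp z"
    and Gm_pos: "0 < Gm z" and Gm_less_1: "Gm z < 1" and Gp_less_1: "Gp z < 1"
begin

lemma mono_Gp: "mono Gp"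
proof (rule monoI)
  fix a b :: real
  assume "a \<le> b"
  then have "0 \<le> exp a * (Gm b - Gm a)" using mono_Gm by (simp add: monoD)
  with Gp_diff_ge[OF \<open>a \<le> b\<close>] show "Gp a \<le> Gp b" by linarith
qed

lemma gap_lower_bound_nonpos:
  assumes "z \<le> 0" "w \<le> z"
  shows "(1 - exp w) * Gm w \<le> Gm z - Gp z"
proof -
  have "Gp z - Gp w \<le> exp z * (Gm z - Gm w)" using Gp_diff_le assms(2) .
  also have "\<dots> \<le> Gm z - Gm w"
    using assms mono_Gm by (simp add: mult_left_le_one_le monoD)
  finally show ?thesis using Gp_le[of w] by (simp add: algebra_simps)
qed

lemma gap_lower_bound_pos:
  assumes "0 < z" "z \<le> c"
  shows "(exp c - 1) * (1 - Gm c) \<le> Gm z - Gp z"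
proof -
  have "Gm z \<le> Gm c" using assms(2) mono_Gm by (simp add: monoD)
  then have "Gm c - Gm z \<le> exp z * (Gm c - Gm z)"
    using assms(1) by (simp add: mult_le_cancel_right1)
  also have "\<dots> \<le> Gp c - Gp z" using Gp_diff_ge assms(2) .
  finally show ?thesis using Gp_upper_tail_ge[of c] by (simp add: algebra_simps)
qed

lemma gap_uniformly_pos: "\<exists>d>0. \<forall>z. a \<le> z \<longrightarrow> z \<le> b \<longrightarrow> d \<le> Gm z - Gp z"
proof -
  define w where "w = min a (-1)"
  define c where "c = max b 1"
  define d where "d = min ((1 - exp w) * Gm w) ((exp c - 1) * (1 - Gm c))"
  have "0 < d"
    using Gm_pos[of w] Gm_less_1[of c] by (simp add: d_def w_def c_def)
  moreover have "d \<le> Gm z - Gp z" if "a \<le> z" "z \<le> b" for z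
  proof (cases "z \<le> 0")
    case True
    then show ?thesis
      using gap_lower_bound_nonpos[of z w] that unfolding d_def w_def by linarith
  next
    case False
    then show ?thesis
      using gap_lower_bound_pos[of z c] that unfolding d_def c_def by linarith
  qed
  ultimately show ?thesis by blast
qed

lemma Gp_le_Gm: "Gp z \<le> Gm z"
  using gap_uniformly_pos[of z z] by force

definition D :: "real \<Rightarrow> real" where
  "D y = ln ((1 - Gp (-y)) / (1 - Gm (-y)))"

lemma exp_D: "exp (D y) = (1 - Gp (-y)) / (1 - Gm (-y))"
  using Gm_less_1[of "-y"] Gp_less_1[of "-y"] by (simp add: D_def)

lemma gap_le_D: "Gm (-y) - Gp (-y) \<le> D y"
proof -
  define A where "A = 1 - Gp (-y)"
  define B where "B = 1 - Gm (-y)"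
  have A: "0 < A" "A \<le> 1" using Gp_less_1[of "-y"] Gp_nonneg[of "-y"] by (auto simp: A_def)
  have B: "0 < B" "B \<le> A" using Gm_less_1[of "-y"] Gp_le_Gm[of "-y"] by (auto simp: A_def B_def)
  have "A - B \<le> (A - B) / A" using A B by (simp add: le_divide_eq mult_right_le_one_le)
  also have "\<dots> = 1 - B / A" using A by (simp add: field_simps)
  also have "\<dots> \<le> - ln (B / A)" using ln_le_minus_one[of "B / A"] A B by simp
  also have "\<dots> = ln (A / B)" using A B by (simp add: ln_div)
  finally show ?thesis by (simp add: D_def A_def B_def)
qed

lemma D_nonneg: "0 \<le> D y"
  using gap_le_D[of y] Gp_le_Gm[of "-y"] by linarith

lemma exp_D_le: "L \<le> y \<Longrightarrow> exp (D y) \<le> 1 / (1 - Gm (-L))"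
  using Gp_nonneg[of "-y"] Gm_less_1[of "-y"] Gm_less_1[of "-L"] monoD[OF mono_Gm, of "-y" "-L"]
  by (auto simp: exp_D intro!: frac_le)

lemma Gp_le_exp_decrement:
  assumes "1 \<le> y" "exp (D y) \<le> M"
  shows "Gp (-y) \<le> 2 * M * (exp (-y) - exp (-(y + D y)))"
proof -
  have "exp (-y) \<le> 1 / 2"
  proof -
    have "exp (-y) \<le> exp (-1)" using assms(1) by simp
    also have "exp (-1::real) \<le> 1 / 2"
      using exp_ge_add_one_self[of "1::real"] by (simp add: exp_minus field_simps)
    finally show ?thesis .
  qed
  then have "Gm (-y) * exp (-y) \<le> Gm (-y) * (1 / 2)"
    using Gm_pos[of "-y"] by (intro mult_left_mono) auto
  then have "Gm (-y) / 2 \<le> (1 - exp (-y)) * Gm (-y)" by (simp add: algebra_simps)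
  also have "\<dots> \<le> Gm (-y) - Gp (-y)" using Gp_le[of "-y"] by (simp add: algebra_simps)
  also have "\<dots> \<le> D y" by (rule gap_le_D)
  finally have Gm_le: "Gm (-y) \<le> 2 * D y" by simp
  have "D y \<le> exp (D y) - 1" using exp_ge_add_one_self[of "D y"] by linarith
  also have "\<dots> = exp (D y) * (1 - exp (- D y))" by (simp add: algebra_simps exp_minus)
  also have "\<dots> \<le> M * (1 - exp (- D y))"
    using assms(2) D_nonneg[of y] by (intro mult_right_mono) auto
  finally have D_le: "D y \<le> M * (1 - exp (- D y))" .
  have "Gp (-y) \<le> exp (-y) * (2 * D y)"
    using Gp_le[of "-y"] Gm_le by (smt (verit) exp_gt_zero mult_left_mono)
  also have "\<dots> \<le> exp (-y) * (2 * (M * (1 - exp (- D y))))"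
    using D_le by (intro mult_left_mono) auto
  also have "\<dots> = 2 * M * (exp (-y) - exp (-(y + D y)))"
    by (simp add: algebra_simps exp_add[symmetric])
  finally show ?thesis .
qed

definition orbit :: "real \<Rightarrow> nat \<Rightarrow> real" where
  "orbit x k = ((\<lambda>y. y + D y) ^^ k) x"

lemma orbit_0 [simp]: "orbit x 0 = x"
  and orbit_Suc: "orbit x (Suc k) = orbit x k + D (orbit x k)"
  by (simp_all add: orbit_def)

lemma incseq_orbit: "incseq (orbit x)"
  by (rule incseq_SucI) (simp add: orbit_Suc D_nonneg)

lemma orbit_ge: "x \<le> orbit x k"
  using incseq_orbit[of x] by (metis incseq_def le0 orbit_0)

lemma orbit_eventually_exceeds: "\<exists>K. \<forall>x\<ge>L. T < orbit x K"
proof -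
  obtain d where "d > 0" and gap: "\<forall>z. -T \<le> z \<longrightarrow> z \<le> -L \<longrightarrow> d \<le> Gm z - Gp z"
    using gap_uniformly_pos by blast
  have d: "d \<le> D y" if "L \<le> y" "y \<le> T" for y
    using gap[rule_format, of "-y"] gap_le_D[of y] that by simp
  define K where "K = nat \<lceil>(T - L) / d\<rceil> + 1"
  have "T < orbit x K" if "L \<le> x" for x
  proof (rule ccontr)
    have linear_growth: "orbit x k \<le> T \<longrightarrow> x + real k * d \<le> orbit x k" for k
    proof (induction k)
      case (Suc k)
      have "orbit x k \<le> orbit x (Suc k)" by (simp add: orbit_Suc D_nonneg)
      moreover have "L \<le> orbit x k" using that orbit_ge[of x k] by linarith
      ultimately show ?case
        using Suc.IH d[of "orbit x k"] by (auto simp: orbit_Suc algebra_simps)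
    qed simp
    assume "\<not> T < orbit x K"
    then have "real K * d \<le> T - L" using linear_growth[of K] that by auto
    then have "real K \<le> (T - L) / d" using \<open>d > 0\<close> by (simp add: field_simps)
    then show False unfolding K_def by linarith
  qed
  then show ?thesis by blast
qed

lemma orbit_tail_prod_ge:
  assumes "L \<le> x" "1 \<le> T" "T \<le> orbit x K"
  shows "1 - 2 / (1 - Gm (-L)) * exp (-T) \<le> (\<Prod>k\<in>{K..<N}. 1 - Gp (- orbit x k))"
proof (cases "K \<le> N")
  case True
  define M where "M = 1 / (1 - Gm (-L))"
  have "M > 0" using Gm_less_1[of "-L"] by (simp add: M_def)
  have "(\<Sum>k\<in>{K..<N}. Gp (- orbit x k))
      \<le> (\<Sum>k\<in>{K..<N}. 2 * M * (exp (- orbit x k) - exp (- orbit x (Suc k))))"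
  proof (rule sum_mono)
    fix k assume "k \<in> {K..<N}"
    then have "T \<le> orbit x k"
      using assms(3) incseq_orbit[of x] by (meson atLeastLessThan_iff incseq_def order_trans)
    then have "1 \<le> orbit x k" using assms(2) by linarith
    moreover have "L \<le> orbit x k" using assms(1) orbit_ge[of x k] by linarith
    ultimately show "Gp (- orbit x k) \<le> 2 * M * (exp (- orbit x k) - exp (- orbit x (Suc k)))"
      unfolding M_def orbit_Suc by (intro Gp_le_exp_decrement exp_D_le)
  qed
  also have "\<dots> = 2 * M * (exp (- orbit x K) - exp (- orbit x N))"
    using sum_Suc_diff'[OF True, of "\<lambda>k. - exp (- orbit x k)"]
    by (simp add: sum_distrib_left[symmetric])
  also have "\<dots> \<le> 2 * M * exp (-T)"
  proof -
    have "exp (- orbit x K) \<le> exp (-T)" using assms(3) by simp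
    then have "exp (- orbit x K) - exp (- orbit x N) \<le> exp (-T)"
      using exp_gt_zero[of "- orbit x N"] by linarith
    then show ?thesis using \<open>M > 0\<close> by simp
  qed
  finally have "1 - 2 * M * exp (-T) \<le> 1 - (\<Sum>k\<in>{K..<N}. Gp (- orbit x k))" by linarith
  also have "\<dots> \<le> (\<Prod>k\<in>{K..<N}. 1 - Gp (- orbit x k))"
    by (rule Weierstrass_prod_ineq) (simp add: Gp_nonneg Gp_less_1 less_imp_le)
  finally show ?thesis by (simp add: M_def)
next
  case False
  then show ?thesis using Gm_less_1[of "-L"] by simp
qed

lemma orbit_survival_bound: "\<exists>m>0. \<forall>x\<ge>L. \<forall>N. m \<le> (\<Prod>k<N. 1 - Gp (- orbit x k))"
proof -
  define T where "T = max 1 (ln (4 / (1 - Gm (-L))))"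
  have "1 \<le> T" by (simp add: T_def)
  have "4 / (1 - Gm (-L)) = exp (ln (4 / (1 - Gm (-L))))"
    using Gm_less_1[of "-L"] by simp
  also have "\<dots> \<le> exp T" by (simp add: T_def)
  finally have "4 / (1 - Gm (-L)) \<le> exp T" .
  then have tail: "1 / 2 \<le> 1 - 2 / (1 - Gm (-L)) * exp (-T)"
    using Gm_less_1[of "-L"] by (simp add: exp_minus field_simps)
  obtain K where K: "\<And>x. L \<le> x \<Longrightarrow> T < orbit x K"
    using orbit_eventually_exceeds by blast
  define p where "p = 1 - Gp (-L)"
  have p: "0 < p" "p \<le> 1" using Gp_less_1[of "-L"] Gp_nonneg[of "-L"] by (auto simp: p_def)
  have "(p ^ K / 2) \<le> (\<Prod>k<N. 1 - Gp (- orbit x k))" if "L \<le> x" for x N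
  proof -
    have head: "p ^ n \<le> (\<Prod>k<n. 1 - Gp (- orbit x k))" for n
    proof -
      have "Gp (- orbit x k) \<le> Gp (-L)" for k
        using that orbit_ge[of x k] by (intro monoD[OF mono_Gp]) simp
      then have "(\<Prod>k<n. p) \<le> (\<Prod>k<n. 1 - Gp (- orbit x k))"
        using p by (intro prod_mono) (auto simp: p_def)
      then show ?thesis by simp
    qed
    show ?thesis
    proof (cases "N \<le> K")
      case True
      then have "p ^ K \<le> p ^ N" using p by (intro power_decreasing) auto
      moreover have "0 \<le> p ^ K" using p by simp
      ultimately show ?thesis using head[of N] by linarith
    next
      case False
      then have split: "{..<N} = {..<K} \<union> {K..<N}" by auto
      have "1 / 2 \<le> (\<Prod>k\<in>{K..<N}. 1 - Gp (- orbit x k))"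
        using tail orbit_tail_prod_ge[OF that \<open>1 \<le> T\<close> less_imp_le[OF K[OF that]], of N] by linarith
      then have "p ^ K * (1 / 2)
          \<le> (\<Prod>k<K. 1 - Gp (- orbit x k)) * (\<Prod>k\<in>{K..<N}. 1 - Gp (- orbit x k))"
        using head[of K] Gp_less_1 by (intro mult_mono prod_nonneg) (auto simp: less_imp_le)
      also have "\<dots> = (\<Prod>k<N. 1 - Gp (- orbit x k))"
        unfolding split by (subst prod.union_disjoint) auto
      finally show ?thesis by simp
    qed
  qed
  moreover have "0 < p ^ K / 2" using p by simp
  ultimately show ?thesis by blast
qed

end

section \<open>The signal model\<close>

lemma pubLLR_cong: "(\<And>i. i < n \<Longrightarrow> f i = g i) \<Longrightarrow> pubLLR mu_p mu_m n f = pubLLR mu_p mu_m n g"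
proof (induction mu_p mu_m n f arbitrary: g rule: pubLLR.induct)
  case (3 mu_p mu_m n w)
  then have "pubLLR mu_p mu_m (Suc n) w = pubLLR mu_p mu_m (Suc n) g" and "w (Suc n) = g (Suc n)"
    by auto
  then show ?case by (simp add: Let_def)
qed auto

lemma pubLLR_0_eq: "pubLLR mu_p mu_m 0 = (\<lambda>_. 0)"
  and pubLLR_1_eq: "pubLLR mu_p mu_m (Suc 0) = (\<lambda>_. 0)"
  by (simp_all add: fun_eq_iff)

lemma all_less_shift_iff: "(\<forall>k<N. P (t + k) k) \<longleftrightarrow> (\<forall>i\<in>{t..<t+N}. P i (i - t))"
  for t N :: nat
  by (metis add.commute add_diff_cancel_left' atLeastLessThan_iff le_add1 le_add_diff_inverse
      less_diff_conv2 nat_add_left_cancel_less)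

locale signal_model =
  fixes mu_p mu_m :: "real measure"
  assumes prob_p: "prob_space mu_p" and prob_m: "prob_space mu_m"
    and sets_p: "sets mu_p = sets borel" and sets_m: "sets mu_m = sets borel"
    and ac_p_m: "absolutely_continuous mu_p mu_m" and ac_m_p: "absolutely_continuous mu_m mu_p"
    and unbounded: "\<forall>M::real.
        (measure mu_p {s \<in> space mu_p. LLR mu_p mu_m s > M}
          + measure mu_m {s \<in> space mu_m. LLR mu_p mu_m s > M}) / 2 > 0
      \<and> (measure mu_p {s \<in> space mu_p. LLR mu_p mu_m s < -M}
          + measure mu_m {s \<in> space mu_m. LLR mu_p mu_m s < -M}) / 2 > 0"
begin

interpretation P: prob_space mu_p by (rule prob_p)
interpretation N: prob_space mu_m by (rule prob_m)

lemma space_p: "space mu_p = UNIV" and space_m: "space mu_m = UNIV"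
  using sets_eq_imp_space_eq[OF sets_p] sets_eq_imp_space_eq[OF sets_m] by auto

lemma sets_p_m: "sets mu_p = sets mu_m"
  using sets_p sets_m by simp

lemma borel_measurable_RN_deriv_borel: "RN_deriv mu_m mu_p \<in> borel_measurable borel"
  using borel_measurable_RN_deriv[of mu_m mu_p] unfolding measurable_cong_sets[OF sets_m refl] .

lemma borel_measurable_LLR [measurable]: "LLR mu_p mu_m \<in> borel_measurable borel"
  unfolding LLR_def[abs_def] using borel_measurable_RN_deriv_borel by measurable

lemma density_RN_deriv_eq: "density mu_m (RN_deriv mu_m mu_p) = mu_p"
  using N.density_RN_deriv[OF ac_m_p sets_p_m] .

lemma AE_RN_deriv_nonzero: "AE s in mu_m. RN_deriv mu_m mu_p s \<noteq> 0"
proof -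
  define Z where "Z = {s. RN_deriv mu_m mu_p s = 0}"
  have Z: "Z \<in> sets borel" unfolding Z_def using borel_measurable_RN_deriv_borel by measurable
  have "emeasure mu_p Z = (\<integral>\<^sup>+ s. RN_deriv mu_m mu_p s * indicator Z s \<partial>mu_m)"
    using Z sets_m by (subst density_RN_deriv_eq[symmetric]) (simp add: emeasure_density)
  also have "\<dots> = 0"
    by (simp add: nn_integral_0_iff_AE indicator_def Z_def)
  finally have "Z \<in> null_sets mu_m"
    using Z sets_p ac_p_m by (auto simp: absolutely_continuous_def null_sets_def)
  then show ?thesis by (rule AE_I') (auto simp: Z_def)
qed

lemma AE_RN_deriv_eq_exp_LLR: "AE s in mu_m. RN_deriv mu_m mu_p s = ennreal (exp (LLR mu_p mu_m s))"
  using N.RN_deriv_finite[OF P.sigma_finite_measure_axioms ac_m_p sets_p_m] AE_RN_deriv_nonzero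
proof eventually_elim
  case (elim s)
  then show ?case
    by (cases "RN_deriv mu_m mu_p s" rule: ennreal_cases) (auto simp: LLR_def)
qed

lemma emeasure_p_eq_nn_integral:
  "S \<in> sets borel \<Longrightarrow>
   emeasure mu_p S = (\<integral>\<^sup>+ s. ennreal (exp (LLR mu_p mu_m s)) * indicator S s \<partial>mu_m)"
  using sets_m AE_RN_deriv_eq_exp_LLR
  by (subst density_RN_deriv_eq[symmetric]) (auto simp: emeasure_density intro!: nn_integral_cong_AE)

lemma measure_p_le_exp_measure_m:
  assumes S: "S \<in> sets borel" and b: "\<And>s. s \<in> S \<Longrightarrow> LLR mu_p mu_m s \<le> b"
  shows "measure mu_p S \<le> exp b * measure mu_m S"
proof -
  have "emeasure mu_p S \<le> (\<integral>\<^sup>+ s. ennreal (exp b) * indicator S s \<partial>mu_m)"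
    unfolding emeasure_p_eq_nn_integral[OF S] using b
    by (intro nn_integral_mono) (auto simp: indicator_def)
  also have "\<dots> = ennreal (exp b) * emeasure mu_m S"
    using S sets_m by (simp add: nn_integral_cmult_indicator)
  finally show ?thesis
    by (simp add: P.emeasure_eq_measure N.emeasure_eq_measure ennreal_mult'[symmetric])
qed

lemma exp_measure_m_le_measure_p:
  assumes S: "S \<in> sets borel" and b: "\<And>s. s \<in> S \<Longrightarrow> b \<le> LLR mu_p mu_m s"
  shows "exp b * measure mu_m S \<le> measure mu_p S"
proof -
  have "ennreal (exp b) * emeasure mu_m S = (\<integral>\<^sup>+ s. ennreal (exp b) * indicator S s \<partial>mu_m)"
    using S sets_m by (simp add: nn_integral_cmult_indicator)
  also have "\<dots> \<le> emeasure mu_p S"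
    unfolding emeasure_p_eq_nn_integral[OF S] using b
    by (intro nn_integral_mono) (auto simp: indicator_def)
  finally show ?thesis
    by (simp add: P.emeasure_eq_measure N.emeasure_eq_measure ennreal_mult'[symmetric])
qed

lemma measure_p_eq_0_iff: "S \<in> sets borel \<Longrightarrow> measure mu_p S = 0 \<longleftrightarrow> measure mu_m S = 0"
  using ac_p_m ac_m_p sets_p sets_m
  by (auto simp: absolutely_continuous_def P.emeasure_eq_measure N.emeasure_eq_measure
      null_sets_def subset_eq)

lemma measures_pos_if_avg_pos:
  assumes "S \<in> sets borel" "(measure mu_p S + measure mu_m S) / 2 > 0"
  shows "measure mu_p S > 0" "measure mu_m S > 0"
proof -
  have "measure mu_p S \<noteq> 0" "measure mu_m S \<noteq> 0"
    using assms measure_p_eq_0_iff[OF assms(1)] by auto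
  then show "measure mu_p S > 0" "measure mu_m S > 0" by (simp_all add: less_le)
qed

lemma Gp_eq: "Gp mu_p mu_m z = measure mu_p {s. LLR mu_p mu_m s \<le> z}"
  and Gm_eq: "Gm mu_p mu_m z = measure mu_m {s. LLR mu_p mu_m s \<le> z}"
  by (simp_all add: Gp_def Gm_def space_p space_m)

lemma one_minus_Gp: "1 - Gp mu_p mu_m z = measure mu_p {s. z < LLR mu_p mu_m s}"
  and one_minus_Gm: "1 - Gm mu_p mu_m z = measure mu_m {s. z < LLR mu_p mu_m s}"
proof -
  have "{s. z < LLR mu_p mu_m s} = UNIV - {s. LLR mu_p mu_m s \<le> z}" by auto
  then show "1 - Gp mu_p mu_m z = measure mu_p {s. z < LLR mu_p mu_m s}"
    and "1 - Gm mu_p mu_m z = measure mu_m {s. z < LLR mu_p mu_m s}"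
    unfolding Gp_eq Gm_eq
    using P.prob_compl[of "{s. LLR mu_p mu_m s \<le> z}"] N.prob_compl[of "{s. LLR mu_p mu_m s \<le> z}"]
      sets_p sets_m by (simp_all add: space_p space_m)
qed

lemma Gp_diff_eq: "a \<le> b \<Longrightarrow>
    Gp mu_p mu_m b - Gp mu_p mu_m a = measure mu_p {s. a < LLR mu_p mu_m s \<and> LLR mu_p mu_m s \<le> b}"
  and Gm_diff_eq: "a \<le> b \<Longrightarrow>
    Gm mu_p mu_m b - Gm mu_p mu_m a = measure mu_m {s. a < LLR mu_p mu_m s \<and> LLR mu_p mu_m s \<le> b}"
proof -
  assume "a \<le> b"
  then have "{s. a < LLR mu_p mu_m s \<and> LLR mu_p mu_m s \<le> b}
      = {s. LLR mu_p mu_m s \<le> b} - {s. LLR mu_p mu_m s \<le> a}" "{s. LLR mu_p mu_m s \<le> a} \<subseteq> {s. LLR mu_p mu_m s \<le> b}"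
    by auto
  then show "Gp mu_p mu_m b - Gp mu_p mu_m a = measure mu_p {s. a < LLR mu_p mu_m s \<and> LLR mu_p mu_m s \<le> b}"
    and "Gm mu_p mu_m b - Gm mu_p mu_m a = measure mu_m {s. a < LLR mu_p mu_m s \<and> LLR mu_p mu_m s \<le> b}"
    unfolding Gp_eq Gm_eq using sets_p sets_m
    by (simp_all add: P.finite_measure_Diff N.finite_measure_Diff)
qed

lemma sets_LLR_interval: "{s. a < LLR mu_p mu_m s \<and> LLR mu_p mu_m s \<le> b} \<in> sets borel"
  by measurable

lemma LLR_tails_pos:
  "measure mu_p {s. z < LLR mu_p mu_m s} > 0" "measure mu_m {s. z < LLR mu_p mu_m s} > 0"
  "measure mu_m {s. LLR mu_p mu_m s < z} > 0"
proof -
  have above: "{s. z < LLR mu_p mu_m s} \<in> sets borel" by measurable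
  have below: "{s. LLR mu_p mu_m s < z} \<in> sets borel" by measurable
  have "(measure mu_p {s. z < LLR mu_p mu_m s} + measure mu_m {s. z < LLR mu_p mu_m s}) / 2 > 0"
    using unbounded by (simp add: space_p space_m)
  from measures_pos_if_avg_pos[OF above this]
  show "measure mu_p {s. z < LLR mu_p mu_m s} > 0" "measure mu_m {s. z < LLR mu_p mu_m s} > 0" .
  have "(measure mu_p {s. LLR mu_p mu_m s < z} + measure mu_m {s. LLR mu_p mu_m s < z}) / 2 > 0"
    using unbounded[rule_format, of "-z"] by (simp add: space_p space_m)
  from measures_pos_if_avg_pos(2)[OF below this] show "measure mu_m {s. LLR mu_p mu_m s < z} > 0" .
qed

sublocale llr_cdf_pair "Gp mu_p mu_m" "Gm mu_p mu_m"
proof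
  fix a b z :: real
  have le_z: "{s. LLR mu_p mu_m s \<le> z} \<in> sets borel" by measurable
  have gt_z: "{s. z < LLR mu_p mu_m s} \<in> sets borel" by measurable
  show "mono (Gm mu_p mu_m)"
    using sets_m by (intro monoI) (simp add: Gm_eq N.finite_measure_mono subset_eq)
  show "0 \<le> Gp mu_p mu_m z" by (simp add: Gp_def)
  show "a \<le> b \<Longrightarrow> Gp mu_p mu_m b - Gp mu_p mu_m a \<le> exp b * (Gm mu_p mu_m b - Gm mu_p mu_m a)"
    unfolding Gp_diff_eq Gm_diff_eq by (rule measure_p_le_exp_measure_m[OF sets_LLR_interval]) auto
  show "a \<le> b \<Longrightarrow> exp a * (Gm mu_p mu_m b - Gm mu_p mu_m a) \<le> Gp mu_p mu_m b - Gp mu_p mu_m a"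
    unfolding Gp_diff_eq Gm_diff_eq by (rule exp_measure_m_le_measure_p[OF sets_LLR_interval]) auto
  show "Gp mu_p mu_m z \<le> exp z * Gm mu_p mu_m z"
    unfolding Gp_eq Gm_eq by (rule measure_p_le_exp_measure_m[OF le_z]) auto
  show "exp z * (1 - Gm mu_p mu_m z) \<le> 1 - Gp mu_p mu_m z"
    unfolding one_minus_Gp one_minus_Gm by (rule exp_measure_m_le_measure_p[OF gt_z]) auto
  have "measure mu_m {s. LLR mu_p mu_m s < z} \<le> Gm mu_p mu_m z"
    unfolding Gm_eq using sets_m le_z by (intro N.finite_measure_mono) auto
  then show "0 < Gm mu_p mu_m z" using LLR_tails_pos(3)[of z] by linarith
  show "Gm mu_p mu_m z < 1" "Gp mu_p mu_m z < 1"
    using LLR_tails_pos(1,2)[of z] one_minus_Gp[of z] one_minus_Gm[of z] by linarith+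
qed

lemma D_eq_Dp: "D = Dp mu_p mu_m"
  by (simp add: fun_eq_iff D_def Dp_def)

lemma pubLLR_along_orbit:
  assumes "1 \<le> t" "pubLLR mu_p mu_m t w = x"
    and "\<And>j. j < k \<Longrightarrow> 0 < orbit x j + LLR mu_p mu_m (w (t + j))"
  shows "pubLLR mu_p mu_m (t + k) w = orbit x k"
  using assms(3)
proof (induction k)
  case (Suc k)
  obtain n where n: "t + k = Suc n" using assms(1) by (cases "t + k") auto
  have "pubLLR mu_p mu_m (Suc n) w = orbit x k"
    using Suc n by simp
  moreover have "0 < orbit x k + LLR mu_p mu_m (w (Suc n))" using Suc.prems n by (metis lessI)
  ultimately show ?case using n by (simp add: Let_def orbit_Suc D_eq_Dp)
qed (simp add: assms(2))

lemma all_actions_plus_iff: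
  assumes "1 \<le> t" "pubLLR mu_p mu_m t w = x"
  shows "(\<forall>\<tau>\<ge>t. action mu_p mu_m \<tau> w = 1) \<longleftrightarrow> (\<forall>k. 0 < orbit x k + LLR mu_p mu_m (w (t + k)))"
proof
  assume plus: "\<forall>\<tau>\<ge>t. action mu_p mu_m \<tau> w = 1"
  have "\<forall>j<k. 0 < orbit x j + LLR mu_p mu_m (w (t + j))" for k
  proof (induction k)
    case (Suc k)
    then have "pubLLR mu_p mu_m (t + k) w = orbit x k"
      using pubLLR_along_orbit[OF assms] by blast
    moreover have "action mu_p mu_m (t + k) w = 1" using plus by simp
    ultimately have "0 < orbit x k + LLR mu_p mu_m (w (t + k))"
      by (simp add: action_def split: if_splits)
    then show ?case using Suc by (auto simp: less_Suc_eq)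
  qed simp
  then show "\<forall>k. 0 < orbit x k + LLR mu_p mu_m (w (t + k))" by blast
next
  assume "\<forall>k. 0 < orbit x k + LLR mu_p mu_m (w (t + k))"
  then show "\<forall>\<tau>\<ge>t. action mu_p mu_m \<tau> w = 1"
    using pubLLR_along_orbit[OF assms] by (auto simp: action_def dest!: le_Suc_ex)
qed

lemma borel_measurable_Dp [measurable]: "Dp mu_p mu_m \<in> borel_measurable borel"
  and borel_measurable_Dm [measurable]: "Dm mu_p mu_m \<in> borel_measurable borel"
  using borel_measurable_mono[OF mono_Gp] borel_measurable_mono[OF mono_Gm]
  unfolding Dp_def[abs_def] Dm_def[abs_def] by measurable

lemma measurable_pubLLR:
  "{..<n} \<subseteq> K \<Longrightarrow> pubLLR mu_p mu_m n \<in> borel_measurable (PiM K (\<lambda>_. mu_p))"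
proof (induction n)
  case (Suc n)
  show ?case
  proof (cases n)
    case (Suc j)
    have "(\<lambda>w. w (Suc j)) \<in> measurable (PiM K (\<lambda>_. mu_p)) mu_p"
      using Suc.prems \<open>n = Suc j\<close> by (intro measurable_component_singleton) auto
    then have "(\<lambda>w. LLR mu_p mu_m (w (Suc j))) \<in> borel_measurable (PiM K (\<lambda>_. mu_p))"
      using borel_measurable_LLR unfolding measurable_cong_sets[OF sets_p refl, symmetric]
      by (rule measurable_compose)
    moreover have "pubLLR mu_p mu_m (Suc j) \<in> borel_measurable (PiM K (\<lambda>_. mu_p))"
      using Suc.IH Suc.prems \<open>n = Suc j\<close> by (simp add: subset_eq)
    ultimately show ?thesis unfolding \<open>n = Suc j\<close> pubLLR.simps Let_def by measurable
  qed (simp add: pubLLR_1_eq)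
qed (simp add: pubLLR_0_eq)

subsection \<open>Independence of future signals from the public belief\<close>

interpretation PP: product_prob_space "\<lambda>_::nat. mu_p" "UNIV :: nat set"
  by (simp add: product_prob_space_def product_prob_space_axioms_def product_sigma_finite_def
      prob_p prob_space_imp_sigma_finite)

interpretation Q: prob_space "Pplus mu_p"
  unfolding Pplus_def by (rule prob_space_PiM) (rule prob_p)

lemma space_Pplus: "space (Pplus mu_p) = UNIV"
  by (auto simp: Pplus_def space_PiM space_p PiE_def extensional_def)

lemma indep_vars_coordinates: "Q.indep_vars (\<lambda>_. mu_p) (\<lambda>i w. w i) UNIV"
proof -
  have "(\<lambda>x::nat \<Rightarrow> real. restrict x UNIV) = (\<lambda>x. x)" by (auto simp: fun_eq_iff)
  then show ?thesis
    unfolding Pplus_def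
    by (intro iffD2[OF PP.indep_vars_iff_distr_eq_PiM]) (auto simp: PP.PiM_component distr_id)
qed

lemma sets_ellEq: "ellEq mu_p mu_m t x \<in> sets (Pplus mu_p)"
  using measurable_pubLLR[of t UNIV] unfolding ellEq_def Pplus_def by measurable

definition plus_block :: "nat \<Rightarrow> (nat \<Rightarrow> real) \<Rightarrow> nat \<Rightarrow> (nat \<Rightarrow> real) set" where
  "plus_block t xs N = {w. \<forall>k<N. 0 < xs k + LLR mu_p mu_m (w (t + k))}"

lemma plus_block_eq_Collect:
  "plus_block t xs N
    = {w \<in> space (Pplus mu_p). \<forall>i\<in>{t..<t+N}. w i \<in> {s. 0 < xs (i - t) + LLR mu_p mu_m s}}"
proof -
  have "w \<in> plus_block t xs N \<longleftrightarrow> (\<forall>i\<in>{t..<t+N}. 0 < xs (i - t) + LLR mu_p mu_m (w i))" for w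
    unfolding plus_block_def using all_less_shift_iff[of N "\<lambda>i k. 0 < xs k + LLR mu_p mu_m (w i)" t]
    by simp
  then show ?thesis by (auto simp: space_Pplus)
qed

lemma sets_plus_block: "plus_block t xs N \<in> sets (Pplus mu_p)"
  unfolding plus_block_eq_Collect unfolding Pplus_def using sets_p by measurable

lemma measure_plus_block: "measure (Pplus mu_p) (plus_block t xs N) = (\<Prod>k<N. 1 - Gp mu_p mu_m (- xs k))"
proof -
  have "emeasure (Pplus mu_p) (plus_block t xs N)
      = (\<Prod>i\<in>{t..<t+N}. emeasure mu_p {s. 0 < xs (i - t) + LLR mu_p mu_m s})"
    unfolding plus_block_eq_Collect Pplus_def using sets_p by (intro PP.emeasure_PiM_Collect) auto
  also have "\<dots> = ennreal (\<Prod>k<N. 1 - Gp mu_p mu_m (- xs k))"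
  proof -
    have "{s. 0 < xs k + LLR mu_p mu_m s} = {s. - xs k < LLR mu_p mu_m s}" for k by auto
    then show ?thesis
      using prod.shift_bounds_nat_ivl[of "\<lambda>i. measure mu_p {s. 0 < xs (i - t) + LLR mu_p mu_m s}" 0 t N]
      by (simp add: P.emeasure_eq_measure prod_ennreal one_minus_Gp add.commute lessThan_atLeast0)
  qed
  finally show ?thesis
    using Gp_less_1 by (simp add: Q.emeasure_eq_measure less_imp_le prod_nonneg)
qed

lemma measure_ellEq_inter_plus_block:
  "measure (Pplus mu_p) (ellEq mu_p mu_m t x \<inter> plus_block t xs N)
    = measure (Pplus mu_p) (ellEq mu_p mu_m t x) * measure (Pplus mu_p) (plus_block t xs N)"
proof -
  define A where "A = {..<t}"
  define B where "B = {t..<t+N}"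
  have "A \<inter> B = {}" by (auto simp: A_def B_def)
  from Q.indep_var_restrict[OF indep_vars_coordinates this subset_UNIV subset_UNIV]
  have indep: "Q.indep_var (PiM A (\<lambda>_. mu_p)) (\<lambda>\<omega>. restrict \<omega> A) (PiM B (\<lambda>_. mu_p)) (\<lambda>\<omega>. restrict \<omega> B)" .
  define A' where "A' = pubLLR mu_p mu_m t -` {x} \<inter> space (PiM A (\<lambda>_. mu_p))"
  define B' where "B' = PiE B (\<lambda>i. {s. 0 < xs (i - t) + LLR mu_p mu_m s})"
  have A': "A' \<in> sets (PiM A (\<lambda>_. mu_p))"
    unfolding A'_def using measurable_pubLLR[of t A] by (auto simp: A_def intro!: measurable_sets)
  have B': "B' \<in> sets (PiM B (\<lambda>_. mu_p))"
    unfolding B'_def B_def using sets_p by (intro sets_PiM_I_finite) auto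
  have ellEq_eq: "(\<lambda>\<omega>. restrict \<omega> A) -` A' \<inter> space (Pplus mu_p) = ellEq mu_p mu_m t x"
  proof -
    have "pubLLR mu_p mu_m t (restrict w A) = pubLLR mu_p mu_m t w" for w :: "nat \<Rightarrow> real"
      by (rule pubLLR_cong) (auto simp: A_def)
    then show ?thesis by (auto simp: A'_def ellEq_def space_Pplus space_PiM space_p)
  qed
  have block_eq: "(\<lambda>\<omega>. restrict \<omega> B) -` B' \<inter> space (Pplus mu_p) = plus_block t xs N"
    unfolding plus_block_eq_Collect B'_def B_def by (auto simp: space_Pplus PiE_iff)
  have "(\<lambda>\<omega>. (restrict \<omega> A, restrict \<omega> B)) -` (A' \<times> B') \<inter> space (Pplus mu_p)
      = ellEq mu_p mu_m t x \<inter> plus_block t xs N"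
    using ellEq_eq block_eq by auto
  with Q.indep_varD[OF indep A' B'] show ?thesis
    unfolding ellEq_eq block_eq by simp
qed

lemma eventE_inter_ellEq_eq_Inter:
  "1 \<le> t \<Longrightarrow> eventE mu_p mu_m t \<inter> ellEq mu_p mu_m t x = (\<Inter>N. ellEq mu_p mu_m t x \<inter> plus_block t (orbit x) N)"
  using all_actions_plus_iff[of t _ x]
  by (auto simp: eventE_def ellEq_def plus_block_def space_Pplus)

lemma measure_eventE_inter_ellEq_limit:
  assumes "1 \<le> t"
  shows "(\<lambda>N. measure (Pplus mu_p) (ellEq mu_p mu_m t x) * (\<Prod>k<N. 1 - Gp mu_p mu_m (- orbit x k)))
    \<longlonglongrightarrow> measure (Pplus mu_p) (eventE mu_p mu_m t \<inter> ellEq mu_p mu_m t x)"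
proof -
  have "(\<lambda>N. measure (Pplus mu_p) (ellEq mu_p mu_m t x \<inter> plus_block t (orbit x) N))
      \<longlonglongrightarrow> measure (Pplus mu_p) (\<Inter>N. ellEq mu_p mu_m t x \<inter> plus_block t (orbit x) N)"
    using sets_ellEq sets_plus_block
    by (intro Q.finite_Lim_measure_decseq) (auto simp: decseq_def plus_block_def)
  then show ?thesis
    by (simp add: eventE_inter_ellEq_eq_Inter[OF assms] measure_ellEq_inter_plus_block
        measure_plus_block)
qed

end

theorem lemma6:
  fixes mu_p mu_m :: "real measure"
  assumes "prob_space mu_p" and "prob_space mu_m"
    and "sets mu_p = sets borel" and "sets mu_m = sets borel"
    and "absolutely_continuous mu_p mu_m" and "absolutely_continuous mu_m mu_p"
    and unbounded: "\<forall>M::real.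
        (measure mu_p {s \<in> space mu_p. LLR mu_p mu_m s > M}
          + measure mu_m {s \<in> space mu_m. LLR mu_p mu_m s > M}) / 2 > 0
      \<and> (measure mu_p {s \<in> space mu_p. LLR mu_p mu_m s < -M}
          + measure mu_m {s \<in> space mu_m. LLR mu_p mu_m s < -M}) / 2 > 0"
    and "continuous_on UNIV (Gp mu_p mu_m)" and "continuous_on UNIV (Gm mu_p mu_m)"
    and "\<exists>x0::real. convex_on {..<x0} (Gm mu_p mu_m)
                 \<and> (\<forall>x<x0. Gm mu_p mu_m differentiable at x)"
  shows "\<forall>L::real. \<exists>m>0. \<forall>t\<ge>1. \<forall>x\<ge>L.
           measure (Pplus mu_p) (ellEq mu_p mu_m t x) > 0 \<longrightarrow>
           measure (Pplus mu_p) (eventE mu_p mu_m t \<inter> ellEq mu_p mu_m t x)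
             / measure (Pplus mu_p) (ellEq mu_p mu_m t x) \<ge> m"
proof
  fix L :: real
  interpret signal_model mu_p mu_m
    by (rule signal_model.intro) (fact assms)+
  obtain m where "m > 0" and m: "\<And>x N. L \<le> x \<Longrightarrow> m \<le> (\<Prod>k<N. 1 - Gp mu_p mu_m (- orbit x k))"
    using orbit_survival_bound by blast
  have "m \<le> measure (Pplus mu_p) (eventE mu_p mu_m t \<inter> ellEq mu_p mu_m t x)
             / measure (Pplus mu_p) (ellEq mu_p mu_m t x)"
    if "1 \<le> t" "L \<le> x" "measure (Pplus mu_p) (ellEq mu_p mu_m t x) > 0" for t x
  proof -
    have "measure (Pplus mu_p) (ellEq mu_p mu_m t x) * m
        \<le> measure (Pplus mu_p) (ellEq mu_p mu_m t x) * (\<Prod>k<N. 1 - Gp mu_p mu_m (- orbit x k))"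
      for N using m[OF that(2)] by (simp add: mult_left_mono)
    then have "measure (Pplus mu_p) (ellEq mu_p mu_m t x) * m
        \<le> measure (Pplus mu_p) (eventE mu_p mu_m t \<inter> ellEq mu_p mu_m t x)"
      using LIMSEQ_le_const[OF measure_eventE_inter_ellEq_limit[OF that(1)]] by blast
    then show ?thesis using that(3) by (simp add: le_divide_eq mult.commute)
  qed
  with \<open>m > 0\<close> show "\<exists>m>0. \<forall>t\<ge>1. \<forall>x\<ge>L.
      measure (Pplus mu_p) (ellEq mu_p mu_m t x) > 0 \<longrightarrow>
      measure (Pplus mu_p) (eventE mu_p mu_m t \<inter> ellEq mu_p mu_m t x)
        / measure (Pplus mu_p) (ellEq mu_p mu_m t x) \<ge> m"
    by blast
qed

end
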